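(* Let $K,N,J\ge 1$ be integers with $N\le K$. Let $N_0>0$, and for $k=1,\dots,K$ let $h_k^{db}\in\mathbb{C}$ and $P_k'\ge 0$; set $\tilde N_k=N_0+|h_k^{db}|^2P_k'$ and $\bm{K}_{\tilde{\bm n}}=\mathrm{diag}\{\tilde N_1,\dots,\tilde N_K\}$. For $j=1,\dots,J$ let $h^{cb}_{j1},\dots,h^{cb}_{jK}\in\mathbb{C}\setminus\{0\}$ and $\bm H_j=\mathrm{diag}\{h^{cb}_{j1},\dots,h^{cb}_{jK}\}$; let $\bm M_{j1},\bm M_{j2}\in\mathbb{C}^{K\times N}$ and let $\bm A_{j1},\bm A_{j2}$ be $N\times N$ real diagonal matrices with nonnegative diagonal entries; set $$\bm K_{\bm x_j}=\bm M_{j1}\bm A_{j1}\bm M_{j1}^*+\bm M_{j2}\bm A_{j2}\bm M_{j2}^*,\qquad \bm H=(\bm H_1,\dots,\bm H_J),\qquad \bm K_{\bm x}=\mathrm{diag}\{\bm K_{\bm x_1},\dots,\bm K_{\bm x_J}\}$$ (block diagonal), and $\bm K_{\bm y}=\bm K_{\tilde{\bm n}}+\bm H\bm K_{\bm x}\bm H^*$. Define $$C_c=\log\det(\bm K_{\bm y})-\sum_{k=1}^K\log\tilde N_k,$$ and, writing $\lambda_K(\cdot)$ for the largest eigenvalue of a $K\times K$ Hermitian matrix, $$\tau_{K,j}=\lambda_K(\bm M_{j1}\bm A_{j1}\bm M_{j1}^* )+\lambda_K(\bm M_{j2}\bm A_{j2}\bm M_{j2}^* ).$$ Assume that $\bm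 K_{\tilde{\bm n}}$ and $\bm H\bm K_{\bm x}\bm H^*$ have no common eigenvector. Then $$C_c<\sum_{k=1}^{K}\log\left\{1+\frac{\sum_{j=1}^{J}\tau_{K,j}\cdot\max_{1\le k'\le K}|h^{cb}_{jk'}|^2}{N_0+|h_k^{db}|^2P_k'}\right\}.$$
   Context: This is the upper bound on the capacity of the cellular users in an uplink SCMA network coexisting with D2D pairs. The received signal is $\bm y=\sum_{j=1}^J\bm H_j\bm x_j+\tilde{\bm n}$, where $\bm x_j$ is the $K$-dimensional SCMA codeword of cellular user $j$ (zero-mean Gaussian with covariance $\bm K_{\bm x_j}$, obtained from an $N$-dimensional codeword via $\bm x_j=e^{i\theta_j}\bm V_j\bm M'\bm u_j$ with $\bm V_j\bm M'=(\bm M_{j1},\bm M_{j2})$ and $\bm u_j$ having covariance $\mathrm{diag}(\bm A_{j1},\bm A_{j2})$), and $\tilde{\bm n}\sim\mathcal{CN}(\bm 0,\bm K_{\tilde{\bm n}})$ is noise plus D2D interference; $C_c$ is the mutual information $I(\bm x;\bm y\mid\bm H)$ for Gaussian input. $\log$ denotes a logarithm to a fixed base greater than $1$. *)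

theory Defs
  imports "HOL-Analysis.Analysis"
begin

definition cadj :: "complex^'n^'m \<Rightarrow> complex^'m^'n" where
  "cadj A = (\<chi> i j. cnj (A $ j $ i))"

definition diagm :: "('n \<Rightarrow> 'a::zero) \<Rightarrow> 'a^'n^'n" where
  "diagm d = (\<chi> i j. if i = j then d i else 0)"

definition is_eigvec :: "complex^'n^'n \<Rightarrow> complex^'n \<Rightarrow> bool" where
  "is_eigvec A v \<longleftrightarrow> v \<noteq> 0 \<and> (\<exists>\<mu>. A *v v = \<mu> *s v)"

text \<open>Largest eigenvalue of a Hermitian matrix (whose eigenvalues are real).\<close>
definition lambda_max :: "complex^'n^'n \<Rightarrow> real" where
  "lambda_max A = Max {r::real. \<exists>v. v \<noteq> 0 \<and> A *v v = complex_of_real r *s v}"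

end

(*
  K_y = K_n + H K_x H^* is positive definite: K_n = diag (N~_k) is positive and H K_x H^* is the
  sum of the congruences H_j K_x_j H_j^* of positive semidefinite matrices. The standard basis
  vectors are eigenvectors of the diagonal K_n, so by hypothesis none of them is an eigenvector
  of H K_x H^*: K_y has a nonzero off-diagonal entry, and the strict Hadamard inequality gives
  det K_y < prod_k (K_y)_kk. Each diagonal entry (K_y)_kk = N~_k + sum_j |h_jk|^2 (K_x_j)_kk is at
  most N~_k + sum_j tau_j max_k' |h_jk'|^2, because a diagonal entry of a Hermitian matrix is
  bounded by its largest eigenvalue.

  Both matrix facts rest on the spectral theorem, proved by maximising the Rayleigh quotient on
  the unit sphere. After rescaling to unit diagonal, the strict Hadamard inequality becomes the
  strict AM-GM inequality for eigenvalues with mean 1.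
*)
theory Submission
  imports Defs
begin

definition cinner :: "complex^'n \<Rightarrow> complex^'n \<Rightarrow> complex" where
  "cinner x y = (\<Sum>k\<in>UNIV. cnj (x$k) * y$k)"

definition hermitian :: "complex^'n^'n \<Rightarrow> bool" where
  "hermitian A \<longleftrightarrow> cadj A = A"

definition pos_semidef :: "complex^'n^'n \<Rightarrow> bool" where
  "pos_semidef A \<longleftrightarrow> hermitian A \<and> (\<forall>x. 0 \<le> Re (cinner x (A *v x)))"

definition pos_def :: "complex^'n^'n \<Rightarrow> bool" where
  "pos_def A \<longleftrightarrow> hermitian A \<and> (\<forall>x. x \<noteq> 0 \<longrightarrow> 0 < Re (cinner x (A *v x)))"

definition unitary :: "complex^'n^'n \<Rightarrow> bool" where
  "unitary U \<longleftrightarrow> cadj U ** U = mat 1"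

lemma matrix_mult_entry: "(A ** B) $ i $ j = (\<Sum>k\<in>UNIV. A $ i $ k * B $ k $ j)"
  by (simp add: matrix_matrix_mult_def)

lemma matrix_vector_mult_axis: "A *v axis k 1 = column k (A :: 'a::semiring_1^'n^'m)"
  by (simp add: vec_eq_iff matrix_vector_mult_def axis_def column_def if_distrib if_distribR
      cong: if_cong)

lemma sum_if_snd_eq:
  fixes f :: "'a::finite \<times> 'b::finite \<Rightarrow> 'c::comm_monoid_add"
  shows "(\<Sum>p\<in>UNIV. if snd p = k then f p else 0) = (\<Sum>j\<in>UNIV. f (j, k))"
proof -
  have "(\<Sum>p\<in>UNIV. if snd p = k then f p else 0)
      = (\<Sum>j\<in>UNIV. \<Sum>k'\<in>UNIV. if k' = k then f (j, k') else 0)"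
    unfolding UNIV_Times_UNIV [symmetric] sum.cartesian_product by (rule sum.cong) auto
  then show ?thesis
    by simp
qed

lemma det_diagm: "det (diagm (d :: 'n::finite \<Rightarrow> 'a::comm_ring_1)) = (\<Prod>i\<in>UNIV. d i)"
  by (simp add: diagm_def det_diagonal)

lemma diag_congruence_entry:
  "(diagm d ** A ** cadj (diagm d)) $ i $ j = d i * A$i$j * cnj (d j)"
  by (simp add: cadj_def diagm_def matrix_matrix_mult_def if_distrib if_distribR cong: if_cong)

lemma cinner_add_left: "cinner (x + y) z = cinner x z + cinner y z"
  by (simp add: cinner_def distrib_right sum.distrib)

lemma cinner_add_right: "cinner x (y + z) = cinner x y + cinner x z"
  by (simp add: cinner_def distrib_left sum.distrib)

lemma cinner_scale_left: "cinner (c *s x) y = cnj c * cinner x y"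
  by (simp add: cinner_def sum_distrib_left algebra_simps)

lemma cinner_scale_right: "cinner x (c *s y) = c * cinner x y"
  by (simp add: cinner_def sum_distrib_left algebra_simps)

lemma cnj_cinner: "cnj (cinner x y) = cinner y x"
  by (simp add: cinner_def mult.commute)

lemma cnj_mult_self: "cnj c * c = of_real ((cmod c)^2)"
  by (metis complex_norm_square mult.commute)

lemma cinner_self: "cinner x x = of_real ((norm x)^2)"
  by (simp add: cinner_def norm_vec_def L2_set_def sum_nonneg cnj_mult_self)

lemma norm_smult_complex: "norm (c *s (x::complex^'n)) = cmod c * norm x"
  by (simp add: norm_vec_def norm_mult L2_set_right_distrib)

lemma cinner_adjoint: "cinner x (A *v y) = cinner (cadj A *v x) y"
proof -
  have "cinner x (A *v y) = (\<Sum>k\<in>UNIV. \<Sum>l\<in>UNIV. cnj (x$k) * (A$k$l * y$l))"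
    by (simp add: cinner_def matrix_vector_mult_def sum_distrib_left)
  also have "\<dots> = (\<Sum>l\<in>UNIV. \<Sum>k\<in>UNIV. cnj (x$k) * (A$k$l * y$l))"
    by (rule sum.swap)
  also have "\<dots> = cinner (cadj A *v x) y"
    by (simp add: cinner_def matrix_vector_mult_def cadj_def sum_distrib_left sum_distrib_right mult_ac)
  finally show ?thesis .
qed

lemma cinner_axis: "cinner (axis k 1) (A *v axis k 1) = A$k$k"
  by (simp add: cinner_def matrix_vector_mult_def axis_def if_distrib if_distribR cong: if_cong)

lemma cinner_diagm:
  "cinner x (diagm (\<lambda>i. of_real (a i)) *v x) = of_real (\<Sum>i\<in>UNIV. a i * (cmod (x$i))^2)"
  by (simp add: cinner_def diagm_def matrix_vector_mult_def if_distrib if_distribR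
      mult.left_commute cnj_mult_self cong: if_cong)

lemma cinner_congruence:
  "cinner x ((A ** B ** cadj A) *v x) = cinner (cadj A *v x) (B *v (cadj A *v x))"
  by (simp add: matrix_vector_mul_assoc [symmetric] cinner_adjoint)

lemma cadj_cadj [simp]: "cadj (cadj A) = A"
  by (simp add: cadj_def vec_eq_iff)

lemma cadj_matrix_mul: "cadj (A ** B) = cadj B ** cadj A"
  by (simp add: cadj_def vec_eq_iff matrix_matrix_mult_def mult.commute)

lemma cadj_add: "cadj (A + B) = cadj A + cadj B"
  by (simp add: cadj_def vec_eq_iff)

lemma cadj_mat: "cadj (mat 1) = mat 1"
  by (simp add: cadj_def mat_def vec_eq_iff)

lemma cadj_diagm: "cadj (diagm d) = diagm (\<lambda>i. cnj (d i))"
  by (simp add: cadj_def diagm_def vec_eq_iff)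

lemma hermitian_cinner: "hermitian A \<Longrightarrow> cinner x (A *v y) = cinner (A *v x) y"
  by (metis cinner_adjoint hermitian_def)

lemma hermitian_Re_cinner_commute:
  "hermitian A \<Longrightarrow> Re (cinner x (A *v y)) = Re (cinner y (A *v x))"
  by (metis hermitian_cinner cnj_cinner cnj.sel(1))

lemma hermitian_diag_real:
  assumes "hermitian A"
  shows "A$k$k = of_real (Re (A$k$k))"
proof -
  have "cadj A $ k $ k = A $ k $ k"
    using assms by (simp add: hermitian_def)
  then have "Im (A$k$k) = 0"
    by (simp add: cadj_def complex_eq_iff)
  then show ?thesis
    by (simp add: complex_eq_iff)
qed

lemma hermitian_add: "hermitian A \<Longrightarrow> hermitian B \<Longrightarrow> hermitian (A + B)"
  by (simp add: hermitian_def cadj_add)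

lemma hermitian_congruence: "hermitian B \<Longrightarrow> hermitian (A ** B ** cadj A)"
  by (simp add: hermitian_def cadj_matrix_mul matrix_mul_assoc)

lemma hermitian_diagm_of_real: "hermitian (diagm (\<lambda>i. of_real (a i)))"
  by (simp add: hermitian_def cadj_diagm)

lemma unitary_right_inverse: "unitary U \<Longrightarrow> U ** cadj U = mat 1"
  by (simp add: unitary_def matrix_left_right_inverse)

lemma unitary_column_cinner: "unitary U \<Longrightarrow> cinner (column i U) (column i U) = 1"
  by (simp add: unitary_def cinner_def column_def cadj_def matrix_matrix_mult_def vec_eq_iff
      mat_def)

lemma norm_unitary_adjoint:
  assumes "unitary U"
  shows "norm (cadj U *v x) = norm x"
proof -
  have "cinner (cadj U *v x) (cadj U *v x) = cinner x x"
    using unitary_right_inverse[OF assms]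
    by (simp add: cinner_adjoint matrix_vector_mul_assoc)
  then have "(norm (cadj U *v x))^2 = (norm x)^2"
    by (simp only: cinner_self of_real_eq_iff)
  then show ?thesis
    by simp
qed

subsection \<open>The spectral theorem for Hermitian matrices\<close>

text \<open>The matrix whose rows are the conjugates of the \<open>u i\<close>, \<open>i \<in> S\<close>, has the zero row \<open>a\<close>, hence a
  nontrivial kernel.\<close>

lemma exists_nonzero_orthogonal:
  fixes u :: "'n::finite \<Rightarrow> complex^'n"
  assumes "a \<notin> S"
  shows "\<exists>v. v \<noteq> 0 \<and> (\<forall>i\<in>S. cinner (u i) v = 0)"
proof -
  define B :: "complex^'n^'n" where "B = (\<chi> k. if k \<in> S then (\<chi> l. cnj (u k $ l)) else 0)"
  have "det B = 0"
    using assms by (intro det_zero_row(2)[of a]) (simp add: B_def row_def vec_eq_iff)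
  then have "\<not> inj ((*v) B)"
    using det_nz_iff_inj_gen[OF matrix_vector_mul_linear_gen[of B]]
    by (simp only: matrix_of_matrix_vector_mul) simp
  then obtain x y where "x \<noteq> y" "B *v x = B *v y"
    unfolding inj_def by blast
  then have "x - y \<noteq> 0" "B *v (x - y) = 0"
    by (simp_all add: matrix_vector_mult_diff_distrib)
  moreover have "(B *v (x - y)) $ i = cinner (u i) (x - y)" if "i \<in> S" for i
    using that by (simp add: B_def matrix_vector_mult_def cinner_def)
  ultimately show ?thesis
    by (metis zero_index)
qed

lemma linear_coeff_zero_if_quadratic_nonpos:
  fixes a b :: real
  assumes le: "\<And>t. b * t + a * t^2 \<le> 0" and "b \<ge> 0"
  shows "b = 0"
proof (rule ccontr)
  assume "b \<noteq> 0"
  with \<open>b \<ge> 0\<close> have "b > 0" by simp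
  define c where "c = \<bar>a\<bar> + 1"
  have "c > 0" by (simp add: c_def add_nonneg_pos)
  define t where "t = b / (2 * c)"
  have "t > 0" using \<open>b > 0\<close> \<open>c > 0\<close> by (simp add: t_def)
  have "t * (b + a * t) \<le> 0"
    using le[of t] by (simp add: power2_eq_square algebra_simps)
  then have "b + a * t \<le> 0"
    using \<open>t > 0\<close> by (simp add: mult_le_0_iff)
  moreover have "- c * t \<le> a * t"
    using \<open>t > 0\<close> by (intro mult_right_mono) (auto simp: c_def)
  moreover have "c * t = b / 2"
    using \<open>c > 0\<close> by (simp add: t_def)
  ultimately show False
    using \<open>b > 0\<close> by linarith
qed

lemma Re_cinner_hermitian_line:
  assumes "hermitian A"
  shows "Re (cinner (v + of_real t *s w) (A *v (v + of_real t *s w)))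
       = Re (cinner v (A *v v)) + 2 * t * Re (cinner w (A *v v)) + t^2 * Re (cinner w (A *v w))"
proof -
  have "cinner (v + of_real t *s w) (A *v (v + of_real t *s w))
      = cinner v (A *v v) + of_real t * (cinner v (A *v w) + cinner w (A *v v))
        + of_real (t^2) * cinner w (A *v w)"
    by (simp add: vector_scalar_commute cinner_add_left
        cinner_add_right cinner_scale_left cinner_scale_right algebra_simps power2_eq_square)
  then show ?thesis
    using hermitian_Re_cinner_commute[OF assms, of v w] by (simp del: of_real_power)
qed

lemma norm_line_squared:
  "(norm (v + of_real t *s w))^2 = (norm v)^2 + 2 * t * Re (cinner w v) + t^2 * (norm w)^2"
  using Re_cinner_hermitian_line[of "mat 1" v t w]
  by (simp add: hermitian_def cadj_mat cinner_self)

text \<open>Along the line through \<open>v\<close> in the direction of the residual \<open>w = A v - m v\<close>, the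
  quadratic form minus \<open>m\<close> times the squared norm has derivative \<open>2 |w|^2\<close> at \<open>v\<close>; maximality
  of \<open>v\<close> forces it to vanish.\<close>

lemma hermitian_rayleigh_maximiser_eigvec:
  fixes A :: "complex^'n^'n" and v :: "complex^'n"
  defines "m \<equiv> Re (cinner v (A *v v))"
  assumes "hermitian A" and "v \<in> W" "norm v = 1" "A *v v \<in> W"
    and W_lincomb: "\<And>x y c. x \<in> W \<Longrightarrow> y \<in> W \<Longrightarrow> x + c *s y \<in> W"
    and max: "\<And>x. x \<in> W \<Longrightarrow> Re (cinner x (A *v x)) \<le> m * (norm x)^2"
  shows "A *v v = of_real m *s v"
proof -
  define w where "w = A *v v + of_real (- m) *s v"
  have "w \<in> W"
    unfolding w_def using W_lincomb \<open>v \<in> W\<close> \<open>A *v v \<in> W\<close> by blast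
  have "cinner w (A *v v + of_real (- m) *s v) = cinner w (A *v v) + of_real (- m) * cinner w v"
    by (simp only: cinner_add_right cinner_scale_right)
  then have "of_real ((norm w)^2) = cinner w (A *v v) + of_real (- m) * cinner w v"
    by (simp only: w_def [symmetric] cinner_self)
  from arg_cong[OF this, of Re]
  have Aw: "Re (cinner w (A *v v)) = (norm w)^2 + m * Re (cinner w v)"
    by simp
  have quadratic: "2 * (norm w)^2 * t + (Re (cinner w (A *v w)) - m * (norm w)^2) * t^2 \<le> 0" for t
  proof -
    have "v + of_real t *s w \<in> W"
      using W_lincomb \<open>v \<in> W\<close> \<open>w \<in> W\<close> by blast
    from max[OF this]
    have "m + 2 * t * ((norm w)^2 + m * Re (cinner w v)) + t^2 * Re (cinner w (A *v w))
        \<le> m * (1 + 2 * t * Re (cinner w v) + t^2 * (norm w)^2)"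
      unfolding Re_cinner_hermitian_line[OF \<open>hermitian A\<close>] norm_line_squared Aw
      by (simp add: m_def \<open>norm v = 1\<close>)
    moreover have "m * (1 + 2 * t * Re (cinner w v) + t^2 * (norm w)^2)
        - (m + 2 * t * ((norm w)^2 + m * Re (cinner w v)) + t^2 * Re (cinner w (A *v w)))
        = - (2 * (norm w)^2 * t + (Re (cinner w (A *v w)) - m * (norm w)^2) * t^2)"
      by (simp add: power2_eq_square ring_distribs)
    ultimately show ?thesis
      by linarith
  qed
  have "w = 0"
    using linear_coeff_zero_if_quadratic_nonpos[OF quadratic] by simp
  moreover have "A *v v = w + of_real m *s v"
    by (simp add: w_def vec_eq_iff)
  ultimately show ?thesis
    by simp
qed

lemma rayleigh_le_if_le_on_unit:
  fixes A :: "complex^'n^'n"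
  assumes W_scale: "\<And>x c. x \<in> W \<Longrightarrow> c *s x \<in> W"
    and unit: "\<And>x. x \<in> W \<Longrightarrow> norm x = 1 \<Longrightarrow> Re (cinner x (A *v x)) \<le> m"
    and "x \<in> W"
  shows "Re (cinner x (A *v x)) \<le> m * (norm x)^2"
proof (cases "x = 0")
  case True
  then show ?thesis by (simp add: cinner_def)
next
  case False
  define c where "c = complex_of_real (1 / norm x)"
  have "norm (c *s x) = 1"
    using False by (simp add: c_def norm_smult_complex norm_divide)
  then have "Re (cinner (c *s x) (A *v (c *s x))) \<le> m"
    using unit W_scale \<open>x \<in> W\<close> by blast
  moreover have "cinner (c *s x) (A *v (c *s x)) = of_real ((1 / norm x)^2) * cinner x (A *v x)"
    by (simp add: c_def vector_scalar_commute cinner_scale_left cinner_scale_right power2_eq_square)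
  ultimately show ?thesis
    using False by (simp add: field_simps)
qed

lemma closed_cinner_orthogonal: "closed {x. \<forall>i\<in>S. cinner (u i) x = 0}"
proof -
  have "{x. \<forall>i\<in>S. cinner (u i) x = 0} = (\<Inter>i\<in>S. {x. cinner (u i) x = 0})"
    by auto
  moreover have "closed {x. cinner (u i) x = 0}" for i
    unfolding cinner_def by (intro closed_Collect_eq continuous_intros)
  ultimately show ?thesis
    by (simp add: closed_INT)
qed

lemma hermitian_eigvec_orthogonal:
  fixes A :: "complex^'n::finite^'n" and u :: "'n \<Rightarrow> complex^'n"
  assumes "hermitian A" and "a \<notin> S" and eig: "\<forall>i\<in>S. A *v u i = of_real (\<mu> i) *s u i"
  obtains v where "norm v = 1" "\<forall>i\<in>S. cinner (u i) v = 0"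
    "A *v v = of_real (Re (cinner v (A *v v))) *s v"
proof -
  define W where "W = {x. \<forall>i\<in>S. cinner (u i) x = 0}"
  have W_lincomb: "x + c *s y \<in> W" if "x \<in> W" "y \<in> W" for x y c
    using that by (simp add: W_def cinner_add_right cinner_scale_right)
  have W_scale: "c *s x \<in> W" if "x \<in> W" for x c
    using that by (simp add: W_def cinner_scale_right)
  have "cinner (u i) (A *v x) = cnj (of_real (\<mu> i)) * cinner (u i) x" if "i \<in> S" for i x
    using eig that hermitian_cinner[OF \<open>hermitian A\<close>] by (simp add: cinner_scale_left)
  then have A_W: "A *v x \<in> W" if "x \<in> W" for x
    using that by (simp add: W_def)
  define T where "T = sphere 0 1 \<inter> W"
  have "compact T"
    unfolding T_def W_def by (intro compact_Int_closed compact_sphere closed_cinner_orthogonal)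
  obtain v0 where "v0 \<noteq> 0" "v0 \<in> W"
    using exists_nonzero_orthogonal[OF \<open>a \<notin> S\<close>] by (auto simp: W_def)
  then have "complex_of_real (1 / norm v0) *s v0 \<in> T"
    using W_scale by (simp add: T_def norm_smult_complex norm_divide)
  then have "T \<noteq> {}"
    by blast
  have "continuous_on T (\<lambda>x. Re (cinner x (A *v x)))"
    unfolding cinner_def matrix_vector_mult_def by (intro continuous_intros)
  then obtain v where "v \<in> T" and v_max: "\<forall>y\<in>T. Re (cinner y (A *v y)) \<le> Re (cinner v (A *v v))"
    using continuous_attains_sup[OF \<open>compact T\<close> \<open>T \<noteq> {}\<close>] by blast
  then have "v \<in> W" "norm v = 1"
    by (auto simp: T_def)
  have "A *v v = of_real (Re (cinner v (A *v v))) *s v"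
  proof (rule hermitian_rayleigh_maximiser_eigvec[OF \<open>hermitian A\<close> \<open>v \<in> W\<close> \<open>norm v = 1\<close>])
    show "A *v v \<in> W"
      using A_W \<open>v \<in> W\<close> .
    show "x + c *s y \<in> W" if "x \<in> W" "y \<in> W" for x y c
      using W_lincomb that .
    show "Re (cinner x (A *v x)) \<le> Re (cinner v (A *v v)) * (norm x)^2" if "x \<in> W" for x
      using rayleigh_le_if_le_on_unit[OF W_scale _ that] v_max by (simp add: T_def)
  qed
  with that \<open>norm v = 1\<close> \<open>v \<in> W\<close> show ?thesis
    by (simp add: W_def)
qed

lemma hermitian_orthonormal_eigenvectors:
  fixes A :: "complex^'n::finite^'n" and S :: "'n set"
  assumes "hermitian A" and "finite S"
  shows "\<exists>u \<mu>. (\<forall>i\<in>S. \<forall>j\<in>S. cinner (u i) (u j) = (if i = j then 1 else 0)) \<and>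
               (\<forall>i\<in>S. A *v u i = of_real (\<mu> i) *s u i)"
  using \<open>finite S\<close>
proof (induction S rule: finite_induct)
  case empty
  show ?case by simp
next
  case (insert a S)
  then obtain u \<mu> where orth: "\<forall>i\<in>S. \<forall>j\<in>S. cinner (u i) (u j) = (if i = j then 1 else 0)"
    and eig: "\<forall>i\<in>S. A *v u i = of_real (\<mu> i) *s u i"
    by blast
  obtain v where "norm v = 1" and v_orth: "\<forall>i\<in>S. cinner (u i) v = 0"
    and v_eig: "A *v v = of_real (Re (cinner v (A *v v))) *s v"
    using hermitian_eigvec_orthogonal[OF \<open>hermitian A\<close> \<open>a \<notin> S\<close> eig] by blast
  have "cinner v v = 1"
    using \<open>norm v = 1\<close> by (simp add: cinner_self)
  moreover have "cinner v (u i) = 0" if "i \<in> S" for i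
    using v_orth that cnj_cinner[of v "u i"] by auto
  ultimately have "(\<forall>i\<in>insert a S. \<forall>j\<in>insert a S.
      cinner ((u(a := v)) i) ((u(a := v)) j) = (if i = j then 1 else 0)) \<and>
    (\<forall>i\<in>insert a S. A *v (u(a := v)) i = of_real ((\<mu>(a := Re (cinner v (A *v v)))) i) *s (u(a := v)) i)"
    using orth eig v_orth v_eig \<open>a \<notin> S\<close> by auto
  then show ?case
    by blast
qed

theorem hermitian_unitary_diagonalization:
  fixes A :: "complex^'n::finite^'n"
  assumes "hermitian A"
  obtains U \<mu> where "unitary U" "A = U ** diagm (\<lambda>i. of_real (\<mu> i)) ** cadj U"
proof -
  obtain u :: "'n \<Rightarrow> complex^'n" and \<mu>
    where orth: "\<And>i j. cinner (u i) (u j) = (if i = j then 1 else 0)"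
      and eig: "\<And>i. A *v u i = of_real (\<mu> i) *s u i"
    using hermitian_orthonormal_eigenvectors[OF assms finite[of UNIV]] by auto
  define U :: "complex^'n^'n" where "U = (\<chi> k i. u i $ k)"
  have "(cadj U ** U) $ i $ j = mat 1 $ i $ j" for i j
    using orth by (simp add: U_def cadj_def matrix_matrix_mult_def cinner_def mat_def)
  then have "unitary U"
    by (simp add: unitary_def vec_eq_iff)
  have "(A ** U) $ k $ i = (A *v u i) $ k" for k i
    by (simp add: U_def matrix_matrix_mult_def matrix_vector_mult_def)
  moreover have "(U ** diagm (\<lambda>i. of_real (\<mu> i))) $ k $ i = of_real (\<mu> i) * u i $ k" for k i
    by (simp add: U_def matrix_matrix_mult_def diagm_def if_distrib if_distribR mult.commute
        cong: if_cong)
  ultimately have "A ** U = U ** diagm (\<lambda>i. of_real (\<mu> i))"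
    using eig by (simp add: vec_eq_iff)
  then have "A = U ** diagm (\<lambda>i. of_real (\<mu> i)) ** cadj U"
    by (metis \<open>unitary U\<close> unitary_right_inverse matrix_mul_assoc matrix_mul_rid)
  with \<open>unitary U\<close> show ?thesis
    using that by blast
qed

context
  fixes A U :: "complex^'n::finite^'n" and \<mu> :: "'n \<Rightarrow> real"
  assumes U: "unitary U" and A: "A = U ** diagm (\<lambda>i. of_real (\<mu> i)) ** cadj U"
begin

lemma diagonalization_column_eigvec: "A *v column i U = of_real (\<mu> i) *s column i U"
proof -
  have "A ** U = U ** diagm (\<lambda>i. of_real (\<mu> i))"
    using U by (simp add: A matrix_mul_assoc [symmetric] unitary_def)
  then have "(A ** U) $ k $ i = of_real (\<mu> i) * U $ k $ i" for k
    by (simp add: matrix_matrix_mult_def diagm_def if_distrib if_distribR mult.commute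
        cong: if_cong)
  then show ?thesis
    by (simp add: vec_eq_iff column_def matrix_matrix_mult_def matrix_vector_mult_def)
qed

lemma cinner_diagonalization:
  "cinner x (A *v x) = of_real (\<Sum>i\<in>UNIV. \<mu> i * (cmod ((cadj U *v x) $ i))^2)"
  by (simp add: A cinner_congruence cinner_diagm)

lemma eigenvalues_diagonalization:
  "{r::real. \<exists>v. v \<noteq> 0 \<and> A *v v = of_real r *s v} = range \<mu>"
proof
  have "column i U \<noteq> 0" for i
    using unitary_column_cinner[OF U, of i] by (auto simp: cinner_def)
  then show "range \<mu> \<subseteq> {r. \<exists>v. v \<noteq> 0 \<and> A *v v = of_real r *s v}"
    using diagonalization_column_eigvec by blast
next
  show "{r. \<exists>v. v \<noteq> 0 \<and> A *v v = of_real r *s v} \<subseteq> range \<mu>"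
  proof clarify
    fix r v
    assume "v \<noteq> 0" and eig: "A *v v = of_real r *s v"
    define y where "y = cadj U *v v"
    have "diagm (\<lambda>i. of_real (\<mu> i)) *v y = cadj U *v (A *v v)"
      using U by (simp add: y_def A matrix_vector_mul_assoc matrix_mul_assoc unitary_def)
    also have "\<dots> = of_real r *s y"
      by (simp add: eig y_def vector_scalar_commute)
    finally have eig_y: "of_real (\<mu> i) * y $ i = of_real r * y $ i" for i
      by (simp add: diagm_def matrix_vector_mult_def vec_eq_iff if_distrib if_distribR
          cong: if_cong)
    have "y \<noteq> 0"
      using \<open>v \<noteq> 0\<close> norm_unitary_adjoint[OF U, of v] by (auto simp: y_def)
    then obtain i where "y $ i \<noteq> 0"
      by (auto simp: vec_eq_iff)
    with eig_y[of i] show "r \<in> range \<mu>"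
      by (metis mult_cancel_right of_real_eq_iff rangeI)
  qed
qed

lemma lambda_max_diagonalization: "lambda_max A = Max (range \<mu>)"
  by (simp add: lambda_max_def eigenvalues_diagonalization)

lemma det_diagonalization: "det A = (\<Prod>i\<in>UNIV. of_real (\<mu> i))"
proof -
  have "det A = det (diagm (\<lambda>i. of_real (\<mu> i))) * det (U ** cadj U)"
    by (simp add: A det_mul)
  then show ?thesis
    using unitary_right_inverse[OF U] by (simp add: det_diagm)
qed

lemma trace_diagonalization: "trace A = (\<Sum>i\<in>UNIV. of_real (\<mu> i))"
proof -
  have "trace A = trace (diagm (\<lambda>i. of_real (\<mu> i)) ** (cadj U ** U))"
    using trace_mul_sym[of U "diagm (\<lambda>i. of_real (\<mu> i)) ** cadj U"]
    by (simp add: A matrix_mul_assoc)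
  then show ?thesis
    using U by (simp add: unitary_def trace_def diagm_def)
qed

end

lemma rayleigh_le_lambda_max:
  assumes "hermitian A"
  shows "Re (cinner x (A *v x)) \<le> lambda_max A * (norm x)^2"
proof -
  obtain U \<mu> where U: "unitary U" and A: "A = U ** diagm (\<lambda>i. of_real (\<mu> i)) ** cadj U"
    using hermitian_unitary_diagonalization[OF assms] by blast
  define y where "y = cadj U *v x"
  have "Re (cinner x (A *v x)) = (\<Sum>i\<in>UNIV. \<mu> i * (cmod (y $ i))^2)"
    by (simp add: cinner_diagonalization[OF U A] y_def)
  also have "\<dots> \<le> (\<Sum>i\<in>UNIV. Max (range \<mu>) * (cmod (y $ i))^2)"
    by (intro sum_mono mult_right_mono) auto
  also have "\<dots> = Max (range \<mu>) * (norm y)^2"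
    by (simp add: sum_distrib_left norm_vec_def L2_set_def sum_nonneg)
  finally show ?thesis
    by (simp add: y_def norm_unitary_adjoint[OF U] lambda_max_diagonalization[OF U A])
qed

lemma diag_le_lambda_max:
  assumes "hermitian A"
  shows "Re (A$k$k) \<le> lambda_max A"
proof -
  have "(norm (axis k (1::complex)))^2 = 1"
    using cinner_axis[of k "mat 1"] by (simp add: cinner_self mat_def)
  then show ?thesis
    using rayleigh_le_lambda_max[OF assms, of "axis k 1"] by (simp add: cinner_axis)
qed

subsection \<open>Positive definite matrices and Hadamard's inequality\<close>

lemma pos_semidef_add: "pos_semidef A \<Longrightarrow> pos_semidef B \<Longrightarrow> pos_semidef (A + B)"
  by (simp add: pos_semidef_def hermitian_add matrix_vector_mult_add_rdistrib cinner_add_right)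

lemma pos_def_add: "pos_def A \<Longrightarrow> pos_semidef B \<Longrightarrow> pos_def (A + B)"
  by (simp add: pos_def_def pos_semidef_def hermitian_add matrix_vector_mult_add_rdistrib
      cinner_add_right add_pos_nonneg)

lemma pos_semidef_sum:
  assumes "finite S" "\<And>j. j \<in> S \<Longrightarrow> pos_semidef (A j)"
  shows "pos_semidef (\<Sum>j\<in>S. A j)"
  using assms
proof (induction S rule: finite_induct)
  case empty
  show ?case
    by (simp add: pos_semidef_def hermitian_def cadj_def cinner_def vec_eq_iff)
next
  case (insert j S)
  then show ?case
    by (simp add: pos_semidef_add)
qed

lemma pos_semidef_congruence: "pos_semidef B \<Longrightarrow> pos_semidef (A ** B ** cadj A)"
  by (simp add: pos_semidef_def hermitian_congruence cinner_congruence)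

lemma pos_def_congruence:
  assumes "pos_def B" and "\<And>x. x \<noteq> 0 \<Longrightarrow> cadj A *v x \<noteq> 0"
  shows "pos_def (A ** B ** cadj A)"
  using assms by (simp add: pos_def_def hermitian_congruence cinner_congruence)

lemma pos_semidef_diagm: "(\<And>i. 0 \<le> a i) \<Longrightarrow> pos_semidef (diagm (\<lambda>i. of_real (a i)))"
  by (simp add: pos_semidef_def hermitian_diagm_of_real cinner_diagm sum_nonneg)

lemma pos_def_diagm:
  assumes "\<And>i. 0 < a i"
  shows "pos_def (diagm (\<lambda>i. of_real (a i)))"
proof -
  have "0 < (\<Sum>i\<in>UNIV. a i * (cmod (x$i))^2)" if "x \<noteq> 0" for x
  proof -
    obtain k where "x $ k \<noteq> 0"
      using \<open>x \<noteq> 0\<close> by (auto simp: vec_eq_iff)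
    moreover have "0 \<le> a i * (cmod (x$i))^2" for i
      using assms[of i] by simp
    ultimately show ?thesis
      using assms[of k] by (intro sum_pos2[of _ k]) auto
  qed
  then show ?thesis
    by (simp add: pos_def_def hermitian_diagm_of_real cinner_diagm)
qed

lemma pos_semidef_diag_nonneg: "pos_semidef A \<Longrightarrow> 0 \<le> Re (A$k$k)"
  by (metis pos_semidef_def cinner_axis)

lemma pos_def_diag_pos: "pos_def A \<Longrightarrow> 0 < Re (A$k$k)"
  by (metis pos_def_def cinner_axis axis_nth one_neq_zero zero_index)

lemma pos_def_diagonalization_pos:
  assumes "pos_def A" "unitary U" "A = U ** diagm (\<lambda>i. of_real (\<mu> i)) ** cadj U"
  shows "0 < \<mu> i"
proof -
  have "cinner (column i U) (A *v column i U) = of_real (\<mu> i)"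
    by (simp add: diagonalization_column_eigvec[OF assms(2,3)] cinner_scale_right
        unitary_column_cinner[OF assms(2)])
  moreover have "column i U \<noteq> 0"
    using unitary_column_cinner[OF assms(2), of i] by (auto simp: cinner_def)
  ultimately show ?thesis
    using assms(1) by (metis pos_def_def Re_complex_of_real)
qed

text \<open>Strict AM-GM inequality, via \<open>ln x \<le> x - 1\<close> with equality only at \<open>x = 1\<close>.\<close>

lemma prod_lt_one_if_sum_eq_card:
  fixes \<mu> :: "'n::finite \<Rightarrow> real"
  assumes pos: "\<And>k. 0 < \<mu> k" and sum: "(\<Sum>k\<in>UNIV. \<mu> k) = real CARD('n)" and "\<mu> k0 \<noteq> 1"
  shows "(\<Prod>k\<in>UNIV. \<mu> k) < 1"
proof -
  have "(\<Sum>k\<in>UNIV. ln (\<mu> k)) < (\<Sum>k\<in>UNIV. \<mu> k - 1)"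
  proof (rule sum_strict_mono_ex1)
    show "\<forall>k\<in>UNIV. ln (\<mu> k) \<le> \<mu> k - 1"
      using pos ln_le_minus_one by blast
    show "\<exists>k\<in>UNIV. ln (\<mu> k) < \<mu> k - 1"
      using pos[of k0] \<open>\<mu> k0 \<noteq> 1\<close> ln_le_minus_one ln_eq_minus_one
      by (metis UNIV_I order_less_le)
  qed simp
  also have "\<dots> = 0"
    using sum by (simp add: sum_subtractf)
  finally have "ln (\<Prod>k\<in>UNIV. \<mu> k) < 0"
    using pos by (simp add: ln_prod less_imp_neq[symmetric])
  then show ?thesis
    using pos by (simp add: prod_pos)
qed

lemma pos_def_unit_diag_det_lt_one:
  fixes Q :: "complex^'n::finite^'n"
  assumes "pos_def Q" and diag: "\<And>k. Q$k$k = 1" and "Q \<noteq> mat 1"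
  shows "0 < Re (det Q) \<and> Re (det Q) < 1"
proof -
  obtain U \<mu> where U: "unitary U" and Q: "Q = U ** diagm (\<lambda>i. of_real (\<mu> i)) ** cadj U"
    using hermitian_unitary_diagonalization \<open>pos_def Q\<close> by (metis pos_def_def)
  have pos: "0 < \<mu> k" for k
    using pos_def_diagonalization_pos[OF \<open>pos_def Q\<close> U Q] .
  have "of_real (\<Sum>k\<in>UNIV. \<mu> k) = (of_nat CARD('n) :: complex)"
    using trace_diagonalization[OF U Q] diag by (simp add: trace_def)
  then have "(\<Sum>k\<in>UNIV. \<mu> k) = real CARD('n)"
    by (metis of_real_eq_iff of_real_of_nat_eq)
  moreover obtain k0 where "\<mu> k0 \<noteq> 1"
  proof (rule ccontr)
    assume "\<not> thesis"
    with that have "(diagm (\<lambda>i. of_real (\<mu> i)) :: complex^'n^'n) = mat 1"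
      by (auto simp: diagm_def mat_def vec_eq_iff)
    with U Q \<open>Q \<noteq> mat 1\<close> show False
      by (simp add: unitary_right_inverse)
  qed
  ultimately have "(\<Prod>k\<in>UNIV. \<mu> k) < 1"
    using prod_lt_one_if_sum_eq_card pos by blast
  moreover have "Re (det Q) = (\<Prod>k\<in>UNIV. \<mu> k)"
    by (simp add: det_diagonalization[OF U Q] flip: of_real_prod)
  ultimately show ?thesis
    using pos by (simp add: prod_pos)
qed

lemma det_diag_congruence:
  "det (diagm d ** A ** cadj (diagm d)) = of_real (\<Prod>k\<in>UNIV. (cmod (d k))^2) * det A"
proof -
  have "det (diagm d ** A ** cadj (diagm d)) = (\<Prod>k\<in>UNIV. d k) * det A * (\<Prod>k\<in>UNIV. cnj (d k))"
    by (simp add: det_mul cadj_diagm det_diagm)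
  also have "\<dots> = (\<Prod>k\<in>UNIV. cnj (d k) * d k) * det A"
    by (simp add: prod.distrib mult_ac)
  finally show ?thesis
    by (simp add: cnj_mult_self)
qed

lemma pos_def_diag_congruence:
  fixes A :: "complex^'n::finite^'n"
  assumes "pos_def A" and "\<And>k. d k \<noteq> 0"
  shows "pos_def (diagm d ** A ** cadj (diagm d))"
proof (rule pos_def_congruence[OF \<open>pos_def A\<close>])
  fix x :: "complex^'n"
  assume "x \<noteq> 0"
  then obtain k where "x $ k \<noteq> 0"
    by (auto simp: vec_eq_iff)
  then have "(cadj (diagm d) *v x) $ k \<noteq> 0"
    using assms(2)[of k] unfolding cadj_diagm
    by (simp add: diagm_def matrix_vector_mult_def if_distrib if_distribR cong: if_cong)
  then show "cadj (diagm d) *v x \<noteq> 0"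
    by auto
qed

text \<open>Rescaling by \<open>diag (1 / sqrt P\<^sub>k\<^sub>k)\<close> reduces the strict Hadamard inequality to a
  positive definite matrix with unit diagonal.\<close>

theorem hadamard_strict:
  fixes P :: "complex^'n::finite^'n"
  assumes "pos_def P" "i \<noteq> j" "P$i$j \<noteq> 0"
  shows "0 < Re (det P) \<and> Re (det P) < (\<Prod>k\<in>UNIV. Re (P$k$k))"
proof -
  define d where "d k = Re (P$k$k)" for k
  have d_pos: "0 < d k" for k
    using pos_def_diag_pos[OF \<open>pos_def P\<close>] by (simp add: d_def)
  have P_diag: "P$k$k = of_real (d k)" for k
    using \<open>pos_def P\<close> hermitian_diag_real[of P k] unfolding pos_def_def d_def by blast
  define r where "r k = 1 / sqrt (d k)" for k
  have r_d: "r k * d k * r k = 1" for k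
    using d_pos[of k] by (simp add: r_def field_simps)
  define Q where
    "Q = diagm (\<lambda>k. complex_of_real (r k)) ** P ** cadj (diagm (\<lambda>k. complex_of_real (r k)))"
  have Q_entry: "Q $ a $ b = of_real (r a) * P$a$b * of_real (r b)" for a b
    by (simp add: Q_def diag_congruence_entry)
  have "r k \<noteq> 0" for k
    using d_pos[of k] by (simp add: r_def)
  then have "pos_def Q"
    unfolding Q_def using \<open>pos_def P\<close> by (intro pos_def_diag_congruence) simp_all
  moreover have "Q$k$k = 1" for k
    by (simp only: Q_entry P_diag r_d of_real_mult [symmetric] of_real_1)
  moreover have "Q $ i $ j \<noteq> 0"
    using assms(3) d_pos[of i] d_pos[of j] by (simp add: Q_entry r_def)
  then have "Q \<noteq> mat 1"
    using \<open>i \<noteq> j\<close> by (auto simp: mat_def)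
  ultimately have Q_det: "0 < Re (det Q) \<and> Re (det Q) < 1"
    by (rule pos_def_unit_diag_det_lt_one)
  have "det Q * of_real (\<Prod>k\<in>UNIV. d k) = of_real (\<Prod>k\<in>UNIV. r k * d k * r k) * det P"
    by (simp add: Q_def det_diag_congruence prod.distrib power2_eq_square mult_ac)
  then have "det P = det Q * of_real (\<Prod>k\<in>UNIV. d k)"
    by (simp add: r_d del: of_real_prod)
  then have "Re (det P) = Re (det Q) * (\<Prod>k\<in>UNIV. d k)"
    by (simp del: of_real_prod)
  moreover have "0 < (\<Prod>k\<in>UNIV. d k)"
    using d_pos by (simp add: prod_pos)
  ultimately show ?thesis
    using Q_det by (simp add: d_def)
qed

subsection \<open>The uplink channel\<close>

text \<open>\<open>stacked_channel h\<close> is \<open>H = (H\<^sub>1, \<dots>, H\<^sub>J)\<close> with \<open>H\<^sub>j = diag (h j)\<close>, and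
  \<open>block_diagm K = diag (K\<^sub>1, \<dots>, K\<^sub>J)\<close>; the columns of \<open>H\<close> are indexed by pairs \<open>(j, k)\<close>.\<close>

definition stacked_channel :: "('j::finite \<Rightarrow> 'k::finite \<Rightarrow> complex) \<Rightarrow> complex^('j \<times> 'k)^'k" where
  "stacked_channel h = (\<chi> k p. if k = snd p then h (fst p) k else 0)"

definition block_diagm :: "('j::finite \<Rightarrow> complex^'k::finite^'k) \<Rightarrow> complex^('j \<times> 'k)^('j \<times> 'k)" where
  "block_diagm K = (\<chi> p q. if fst p = fst q then K (fst p) $ snd p $ snd q else 0)"

lemma stacked_channel_block_diagm_sandwich:
  fixes h :: "'j::finite \<Rightarrow> 'k::finite \<Rightarrow> complex" and K :: "'j \<Rightarrow> complex^'k^'k"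
  shows "stacked_channel h ** block_diagm K ** cadj (stacked_channel h)
       = (\<Sum>j\<in>UNIV. diagm (h j) ** K j ** cadj (diagm (h j)))"
proof -
  have HK: "(stacked_channel h ** block_diagm K) $ k $ q = h (fst q) k * K (fst q) $ k $ snd q"
    for k q
  proof -
    have "(stacked_channel h ** block_diagm K) $ k $ q
        = (\<Sum>p\<in>UNIV. if snd p = k then (if fst p = fst q then h (fst p) k * K (fst p) $ k $ snd q
            else 0) else 0)"
      unfolding matrix_mult_entry by (auto simp: stacked_channel_def block_diagm_def intro!: sum.cong)
    then show ?thesis
      by (simp add: sum_if_snd_eq)
  qed
  have "(stacked_channel h ** block_diagm K ** cadj (stacked_channel h)) $ k $ l
      = (\<Sum>q\<in>UNIV. if snd q = l then h (fst q) k * K (fst q) $ k $ l * cnj (h (fst q) l) else 0)"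
    for k l
    unfolding matrix_mult_entry[of "stacked_channel h ** block_diagm K"] HK
    by (auto simp: cadj_def stacked_channel_def intro!: sum.cong)
  also have "\<dots> k l = (\<Sum>j\<in>UNIV. diagm (h j) ** K j ** cadj (diagm (h j))) $ k $ l" for k l
    by (simp add: sum_if_snd_eq diag_congruence_entry)
  finally show ?thesis
    by (simp add: vec_eq_iff)
qed

lemma diag_congruence_diag:
  "(diagm d ** A ** cadj (diagm d)) $ k $ k = of_real ((cmod (d k))^2) * A $ k $ k"
proof -
  have "(diagm d ** A ** cadj (diagm d)) $ k $ k = cnj (d k) * d k * A $ k $ k"
    by (simp add: diag_congruence_entry mult_ac)
  then show ?thesis
    by (simp only: cnj_mult_self)
qed

lemma diag_congruence_sum_diag_le:
  fixes h :: "'j::finite \<Rightarrow> 'k::finite \<Rightarrow> complex" and K :: "'j \<Rightarrow> complex^'k^'k"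
  assumes "\<And>j. pos_semidef (K j)" and "\<And>j. Re (K j $ k $ k) \<le> \<tau> j"
  shows "Re ((\<Sum>j\<in>UNIV. diagm (h j) ** K j ** cadj (diagm (h j))) $ k $ k)
      \<le> (\<Sum>j\<in>UNIV. \<tau> j * Max ((\<lambda>k'. (cmod (h j k'))^2) ` UNIV))"
proof -
  have "Re ((\<Sum>j\<in>UNIV. diagm (h j) ** K j ** cadj (diagm (h j))) $ k $ k)
      = (\<Sum>j\<in>UNIV. (cmod (h j k))^2 * Re (K j $ k $ k))"
    by (simp add: diag_congruence_diag del: of_real_power)
  also have "\<dots> \<le> (\<Sum>j\<in>UNIV. \<tau> j * Max ((\<lambda>k'. (cmod (h j k'))^2) ` UNIV))"
  proof (rule sum_mono)
    fix j
    have "(cmod (h j k))^2 \<le> Max ((\<lambda>k'. (cmod (h j k'))^2) ` UNIV)"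
      by (rule Max_ge) auto
    then have "(cmod (h j k))^2 * Re (K j $ k $ k) \<le> Max ((\<lambda>k'. (cmod (h j k'))^2) ` UNIV) * \<tau> j"
      using assms pos_semidef_diag_nonneg
      by (meson mult_mono order_trans zero_le_power2)
    then show "(cmod (h j k))^2 * Re (K j $ k $ k) \<le> \<tau> j * Max ((\<lambda>k'. (cmod (h j k'))^2) ` UNIV)"
      by (simp add: mult.commute)
  qed
  finally show ?thesis .
qed

lemma offdiag_nonzero_if_no_common_eigvec:
  fixes d :: "'n::finite \<Rightarrow> complex" and G :: "complex^'n^'n"
  assumes "\<not> (\<exists>v. is_eigvec (diagm d) v \<and> is_eigvec G v)"
  shows "\<exists>i. i \<noteq> k \<and> G $ i $ k \<noteq> 0"
proof (rule ccontr)
  assume "\<nexists>i. i \<noteq> k \<and> G $ i $ k \<noteq> 0"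
  then have "G *v axis k 1 = G $ k $ k *s axis k 1"
    unfolding matrix_vector_mult_axis by (auto simp: vec_eq_iff column_def axis_def)
  moreover have "diagm d *v axis k 1 = d k *s axis k 1"
    unfolding matrix_vector_mult_axis by (simp add: vec_eq_iff column_def diagm_def axis_def)
  ultimately have "is_eigvec (diagm d) (axis k 1) \<and> is_eigvec G (axis k 1)"
    unfolding is_eigvec_def by auto
  with assms show False
    by blast
qed

lemma log_ratio_sum_bound:
  fixes N :: "'k::finite \<Rightarrow> real"
  assumes "1 < b" "0 < D" "D < (\<Prod>k\<in>UNIV. N k + c)" "\<And>k. 0 < N k" "0 \<le> c"
  shows "log b D - (\<Sum>k\<in>UNIV. log b (N k)) < (\<Sum>k\<in>UNIV. log b (1 + c / N k))"
proof -
  have pos: "0 < N k + c" for k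
    using assms(4,5) by (simp add: add_pos_nonneg)
  have "log b D < log b (\<Prod>k\<in>UNIV. N k + c)"
    using assms(1-3) pos by (simp add: prod_pos)
  also have "\<dots> = (\<Sum>k\<in>UNIV. log b (N k + c))"
    using pos unfolding log_def by (simp add: ln_prod less_imp_neq [symmetric] sum_divide_distrib)
  also have "\<dots> = (\<Sum>k\<in>UNIV. log b (N k) + log b (1 + c / N k))"
  proof (rule sum.cong)
    fix k
    have "N k + c = N k * (1 + c / N k)"
      using assms(4)[of k] by (simp add: distrib_left)
    moreover have "0 < 1 + c / N k"
      using assms(4)[of k] assms(5) by (simp add: add_pos_nonneg)
    ultimately show "log b (N k + c) = log b (N k) + log b (1 + c / N k)"
      using assms(4)[of k] by (simp add: log_mult_pos)
  qed simp
  finally show ?thesis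
    by (simp add: sum.distrib)
qed

lemma capacity_upper_bound:
  fixes b :: real and N :: "'k::finite \<Rightarrow> real" and h :: "'j::finite \<Rightarrow> 'k \<Rightarrow> complex"
    and A1 A2 :: "'j \<Rightarrow> complex^'k^'k"
  defines "G \<equiv> stacked_channel h ** block_diagm (\<lambda>j. A1 j + A2 j) ** cadj (stacked_channel h)"
  assumes "1 < b" and N_pos: "\<And>k. 0 < N k" and "\<And>j. pos_semidef (A1 j)" "\<And>j. pos_semidef (A2 j)"
    and no_common_eigvec: "\<not> (\<exists>v. is_eigvec (diagm (\<lambda>k. of_real (N k))) v \<and> is_eigvec G v)"
  shows "log b (Re (det (diagm (\<lambda>k. of_real (N k)) + G))) - (\<Sum>k\<in>UNIV. log b (N k))
     < (\<Sum>k\<in>UNIV. log b (1 + (\<Sum>j\<in>UNIV. (lambda_max (A1 j) + lambda_max (A2 j))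
          * Max ((\<lambda>k'. (cmod (h j k'))^2) ` UNIV)) / N k))"
proof -
  define Ky where "Ky = diagm (\<lambda>k. of_real (N k)) + G"
  define \<tau> where "\<tau> j = lambda_max (A1 j) + lambda_max (A2 j)" for j
  define c where "c = (\<Sum>j\<in>UNIV. \<tau> j * Max ((\<lambda>k'. (cmod (h j k'))^2) ` UNIV))"
  have K_psd: "pos_semidef (A1 j + A2 j)" for j
    using assms by (intro pos_semidef_add)
  have K_diag_le: "Re ((A1 j + A2 j) $ k $ k) \<le> \<tau> j" for j k
    using diag_le_lambda_max[of "A1 j" k] diag_le_lambda_max[of "A2 j" k] assms(4,5)
    by (simp add: \<tau>_def pos_semidef_def add_mono)
  have G: "G = (\<Sum>j\<in>UNIV. diagm (h j) ** (A1 j + A2 j) ** cadj (diagm (h j)))"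
    unfolding G_def by (rule stacked_channel_block_diagm_sandwich)
  have "pos_def Ky"
    unfolding Ky_def G
    by (intro pos_def_add pos_def_diagm pos_semidef_sum pos_semidef_congruence K_psd N_pos) simp
  obtain i k where "i \<noteq> k" "G $ i $ k \<noteq> 0"
    using offdiag_nonzero_if_no_common_eigvec[OF no_common_eigvec] by metis
  then have "i \<noteq> k" "Ky $ i $ k \<noteq> 0"
    by (simp_all add: Ky_def diagm_def)
  with \<open>pos_def Ky\<close> have det: "0 < Re (det Ky) \<and> Re (det Ky) < (\<Prod>k\<in>UNIV. Re (Ky $ k $ k))"
    by (rule hadamard_strict)
  have "Re (Ky $ k $ k) \<le> N k + c" for k
    using diag_congruence_sum_diag_le[OF K_psd K_diag_le, where h = h and k = k]
    by (simp add: Ky_def G diagm_def c_def)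
  then have "(\<Prod>k\<in>UNIV. Re (Ky $ k $ k)) \<le> (\<Prod>k\<in>UNIV. N k + c)"
    using pos_def_diag_pos[OF \<open>pos_def Ky\<close>] by (intro prod_mono) (auto intro: less_imp_le)
  moreover have "0 \<le> c"
  proof -
    have "0 \<le> \<tau> j" for j
      using K_diag_le[of j k] pos_semidef_diag_nonneg[OF K_psd, of j k] by linarith
    moreover have "0 \<le> Max ((\<lambda>k'. (cmod (h j k'))^2) ` UNIV)" for j
      by (meson Max_ge finite_imageI finite rangeI order_trans zero_le_power2)
    ultimately show ?thesis
      by (simp add: c_def sum_nonneg)
  qed
  ultimately show ?thesis
    using log_ratio_sum_bound[OF \<open>1 < b\<close>, of "Re (det Ky)" N c] det N_pos
    by (simp add: Ky_def c_def \<tau>_def)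
qed

theorem mainTheorem1:
  fixes b :: real and N0 :: real
    and hdb :: "'k::finite \<Rightarrow> complex" and P' :: "'k \<Rightarrow> real"
    and hcb :: "'j::finite \<Rightarrow> 'k \<Rightarrow> complex"
    and M1 M2 :: "'j \<Rightarrow> complex^'n::finite^'k"
    and a1 a2 :: "'j \<Rightarrow> 'n \<Rightarrow> real"
  assumes "b > 1"
    and "CARD('n) \<le> CARD('k)"
    and "N0 > 0"
    and "\<And>k. P' k \<ge> 0"
    and "\<And>j k. hcb j k \<noteq> 0"
    and "\<And>j i. a1 j i \<ge> 0" and "\<And>j i. a2 j i \<ge> 0"
    and "\<not> (\<exists>v. is_eigvec
              (diagm (\<lambda>k. complex_of_real (N0 + (cmod (hdb k))\<^sup>2 * P' k))) v \<and>
            is_eigvec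
              (let Kxj = (\<lambda>j. M1 j ** diagm (\<lambda>i. complex_of_real (a1 j i)) ** cadj (M1 j)
                             + M2 j ** diagm (\<lambda>i. complex_of_real (a2 j i)) ** cadj (M2 j));
                   H = (\<chi> k p. if k = snd p then hcb (fst p) k else 0) :: complex^('j \<times> 'k)^'k;
                   Kx = (\<chi> p q. if fst p = fst q then Kxj (fst p) $ snd p $ snd q else 0)
                          :: complex^('j \<times> 'k)^('j \<times> 'k)
               in H ** Kx ** cadj H) v)"
  shows
    "(let Ntil = (\<lambda>k. N0 + (cmod (hdb k))\<^sup>2 * P' k);
          Kn = diagm (\<lambda>k. complex_of_real (Ntil k));
          Kxj = (\<lambda>j. M1 j ** diagm (\<lambda>i. complex_of_real (a1 j i)) ** cadj (M1 j)
                      + M2 j ** diagm (\<lambda>i. complex_of_real (a2 j i)) ** cadj (M2 j));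
          H = (\<chi> k p. if k = snd p then hcb (fst p) k else 0) :: complex^('j \<times> 'k)^'k;
          Kx = (\<chi> p q. if fst p = fst q then Kxj (fst p) $ snd p $ snd q else 0)
                 :: complex^('j \<times> 'k)^('j \<times> 'k);
          Ky = Kn + H ** Kx ** cadj H;
          Cc = log b (Re (det Ky)) - (\<Sum>k\<in>UNIV. log b (Ntil k));
          tau = (\<lambda>j. lambda_max (M1 j ** diagm (\<lambda>i. complex_of_real (a1 j i)) ** cadj (M1 j))
                    + lambda_max (M2 j ** diagm (\<lambda>i. complex_of_real (a2 j i)) ** cadj (M2 j)))
      in Cc < (\<Sum>k\<in>UNIV. log b (1 + (\<Sum>j\<in>UNIV. tau j * Max ((\<lambda>k'. (cmod (hcb j k'))\<^sup>2) ` UNIV))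
                                        / (N0 + (cmod (hdb k))\<^sup>2 * P' k))))"
proof -
  have N_pos: "0 < N0 + (cmod (hdb k))\<^sup>2 * P' k" for k
    using assms(3,4) by (simp add: add_pos_nonneg)
  have psd: "pos_semidef (M ** diagm (\<lambda>i. complex_of_real (a i)) ** cadj M)"
    if "\<And>i. 0 \<le> a i" for M :: "complex^'n^'k" and a
    using that by (intro pos_semidef_congruence pos_semidef_diagm)
  show ?thesis
    using capacity_upper_bound[OF assms(1) N_pos psd[OF assms(6)] psd[OF assms(7)]] assms(8)
    unfolding Let_def stacked_channel_def block_diagm_def by simp
qed

end
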